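(* Let $(G,d)$ be a boundedly compact $p$-uniformly convex metric space with $p\in(1,\infty)$ and $c>0$, $\lambda>0$, and $f:G\to\mathbb{R}$ proper, lower semicontinuous and strongly convex with modulus $\mu\ge(2-c)/(p\lambda^{p-1})$. (i) If $x_+=\mathrm{prox}^p_{f,\lambda}(x)$, then $\frac{4}{cp\lambda^{p-1}}\Delta^{(p,c)}(x_+,x,x_+,y)\le f(y)-f(x_+)$ for all $y\in G$. (ii) For all $x,y\in G$, with $x_+=\mathrm{prox}^p_{f,\lambda}(x)$, $y_+=\mathrm{prox}^p_{f,\lambda}(y)$, $$d(x_+,y_+)^p\le d(x,y)^p-\frac{1-\alpha}{\alpha}\psi^{(p,c)}(x,y,x_+,y_+),\qquad\alpha=\frac{c}{2+c}.$$
   Context: $(G,d)$ uniquely geodesic; $(1-\tau)x\oplus\tau y$ is the point on the geodesic from $x$ to $y$ at distance $\tau d(x,y)$ from $x$. $p$-uniform convexity with constant $c$: $d(z,(1-\tau)x\oplus\tau y)^p\le(1-\tau)d(z,x)^p+\tau d(z,y)^p-\frac c2\tau(1-\tau)d(x,y)^p$. $f$ strongly convex with modulus $\mu$: $f((1-\tau)x\oplus\tau y)\le(1-\tau)f(x)+\tau f(y)-\frac\mu2(1-\tau)\tau d(x,y)^p$ for all $\tau\in[0,1]$, $x,y$. $\mathrm{prox}^p_{f,\lambda}(x)=\operatorname{argmin}_{y\in G}\{f(y)+\frac1{p\lambda^{p-1}}d(y,x)^p\}$. $\Delta^{(p,c)}(x,y,u,v)=\frac c4\big(d(x,v)^p+d(y,u)^p-d(x,u)^p-d(y,v)^p\big)$;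 $\psi^{(p,c)}(x,y,u,v)=\frac c2\big(d(x,u)^p+d(y,v)^p+d(u,v)^p+d(x,y)^p-d(y,u)^p-d(x,v)^p\big)$. *)

theory Defs
  imports "HOL-Analysis.Analysis"
begin

definition geodesic_path :: "'a::metric_space \<Rightarrow> 'a \<Rightarrow> (real \<Rightarrow> 'a) \<Rightarrow> bool" where
  "geodesic_path x y \<gamma> \<longleftrightarrow> \<gamma> 0 = x \<and> \<gamma> 1 = y \<and>
     (\<forall>s\<in>{0..1}. \<forall>t\<in>{0..1}. dist (\<gamma> s) (\<gamma> t) = \<bar>s - t\<bar> * dist x y)"

definition uniquely_geodesic :: "'a::metric_space itself \<Rightarrow> bool" where
  "uniquely_geodesic _ \<longleftrightarrow> (\<forall>x y::'a. (\<exists>\<gamma>. geodesic_path x y \<gamma>) \<and>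
     (\<forall>\<gamma> \<gamma>'. geodesic_path x y \<gamma> \<longrightarrow> geodesic_path x y \<gamma>' \<longrightarrow> (\<forall>t\<in>{0..1}. \<gamma> t = \<gamma>' t)))"

text \<open>geo x y t = (1-t) x \<oplus> t y: the point on the geodesic from x to y at distance t d(x,y) from x.\<close>
definition geo :: "'a::metric_space \<Rightarrow> 'a \<Rightarrow> real \<Rightarrow> 'a" where
  "geo x y t = (THE z. \<exists>\<gamma>. geodesic_path x y \<gamma> \<and> \<gamma> t = z)"

definition p_uniformly_convex :: "'a::metric_space itself \<Rightarrow> real \<Rightarrow> real \<Rightarrow> bool" where
  "p_uniformly_convex T p c \<longleftrightarrow> uniquely_geodesic T \<and>
     (\<forall>x y z::'a. \<forall>\<tau>\<in>{0..1}.
        dist z (geo x y \<tau>) powr p \<le> (1 - \<tau>) * dist z x powr p + \<tau> * dist z y powr p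
          - c / 2 * \<tau> * (1 - \<tau>) * dist x y powr p)"

definition boundedly_compact :: "'a::metric_space itself \<Rightarrow> bool" where
  "boundedly_compact _ \<longleftrightarrow> (\<forall>S::'a set. bounded S \<and> closed S \<longrightarrow> compact S)"

definition lower_semicont :: "('a::topological_space \<Rightarrow> real) \<Rightarrow> bool" where
  "lower_semicont f \<longleftrightarrow> (\<forall>t. closed {x. f x \<le> t})"

definition strongly_convex :: "('a::metric_space \<Rightarrow> real) \<Rightarrow> real \<Rightarrow> real \<Rightarrow> bool" where
  "strongly_convex f p \<mu> \<longleftrightarrow> (\<forall>x y. \<forall>\<tau>\<in>{0..1}.
     f (geo x y \<tau>) \<le> (1 - \<tau>) * f x + \<tau> * f y - \<mu> / 2 * (1 - \<tau>) * \<tau> * dist x y powr p)"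

definition prox :: "real \<Rightarrow> ('a::metric_space \<Rightarrow> real) \<Rightarrow> real \<Rightarrow> 'a \<Rightarrow> 'a" where
  "prox p f lam x = (THE y. is_arg_min (\<lambda>y. f y + 1 / (p * lam powr (p - 1)) * dist y x powr p) (\<lambda>_. True) y)"

definition Delta :: "real \<Rightarrow> real \<Rightarrow> 'a::metric_space \<Rightarrow> 'a \<Rightarrow> 'a \<Rightarrow> 'a \<Rightarrow> real" where
  "Delta p c x y u v = c / 4 * (dist x v powr p + dist y u powr p - dist x u powr p - dist y v powr p)"

definition psi :: "real \<Rightarrow> real \<Rightarrow> 'a::metric_space \<Rightarrow> 'a \<Rightarrow> 'a \<Rightarrow> 'a \<Rightarrow> real" where
  "psi p c x y u v = c / 2 * (dist x u powr p + dist y v powr p + dist u v powr p + dist x y powr p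
      - dist y u powr p - dist x v powr p)"

end

theory Submission imports Defs begin

text \<open>With K = 1/(p lam^(p-1)), the proximal objective g(y) = f(y) + K d(y,x)^p is, by
  p-uniform convexity of the penalty, strongly convex with modulus mu + c K >= 2 K. For p > 1
  strong convexity makes g coercive, so bounded compactness and lower semicontinuity give a
  minimiser x_+, and letting tau -> 0 in the strong convexity inequality along the geodesic
  from x_+ gives the growth g(y) >= g(x_+) + K d(x_+,y)^p. This makes x_+ the unique minimiser,
  i.e. x_+ = prox(x), and is the three-point inequality
  f(x_+) + K d(x_+,x)^p + K d(x_+,y)^p <= f(y) + K d(y,x)^p.
  Part (i) is a rewriting of it; part (ii) is the sum of its instances for (x, y_+) and (y, x_+).\<close>

lemma lower_semicont_attains_inf:
  fixes g :: "'a::topological_space \<Rightarrow> real"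
  assumes "lower_semicont g" and "compact S" and "S \<noteq> {}"
  shows "\<exists>y\<in>S. \<forall>z\<in>S. g y \<le> g z"
proof -
  have "S \<inter> (\<Inter>t\<in>g ` S. {x. g x \<le> t}) \<noteq> {}"
  proof (rule compact_imp_fip_image[OF \<open>compact S\<close>])
    fix T assume T: "finite T" "T \<subseteq> g ` S"
    show "S \<inter> (\<Inter>t\<in>T. {x. g x \<le> t}) \<noteq> {}"
    proof (cases "T = {}")
      case False
      then obtain z where "z \<in> S" "g z = Min T" using T Min_in[of T] by (metis imageE subsetD)
      then show ?thesis using T by auto
    qed (use \<open>S \<noteq> {}\<close> in auto)
  qed (use assms(1) in \<open>auto simp: lower_semicont_def\<close>)
  then show ?thesis by blast
qed

lemma lower_semicont_add_continuous:
  fixes f h :: "'a::topological_space \<Rightarrow> real"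
  assumes "lower_semicont f" and "continuous_on UNIV h"
  shows "lower_semicont (\<lambda>x. f x + h x)"
  unfolding lower_semicont_def
proof
  fix t
  have split: "{x. f x + h x > t} = (\<Union>s. {x. f x > s} \<inter> {x. h x > t - s})"
  proof (intro set_eqI iffI)
    fix x assume "x \<in> {x. f x + h x > t}"
    then have "f x > (f x + t - h x) / 2" "h x > t - (f x + t - h x) / 2" by (auto simp: field_simps)
    then show "x \<in> (\<Union>s. {x. f x > s} \<inter> {x. h x > t - s})" by blast
  qed auto
  have "open {x. f x > s}" for s
    using assms(1) unfolding lower_semicont_def by (simp add: open_closed not_le[symmetric] Collect_neg_eq)
  moreover have "open {x. h x > t - s}" for s
    by (rule open_Collect_less[OF continuous_on_const assms(2)])
  ultimately have "open {x. f x + h x > t}" unfolding split by (intro open_UN open_Int) auto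
  then show "closed {x. f x + h x \<le> t}" by (simp add: closed_def not_le[symmetric] Collect_neg_eq)
qed

lemma geo_eq_geodesic_path:
  assumes "uniquely_geodesic TYPE('a::metric_space)" and "geodesic_path (x::'a) y \<gamma>" and "t \<in> {0..1}"
  shows "geo x y t = \<gamma> t"
  unfolding geo_def
proof (rule the_equality)
  fix z assume "\<exists>\<gamma>'. geodesic_path x y \<gamma>' \<and> \<gamma>' t = z"
  then show "z = \<gamma> t" using assms unfolding uniquely_geodesic_def by metis
qed (use assms(2) in blast)

lemma dist_geo:
  assumes "uniquely_geodesic TYPE('a::metric_space)" and "t \<in> {0..1}"
  shows "dist (x::'a) (geo x y t) = t * dist x y"
proof -
  obtain \<gamma> where \<gamma>: "geodesic_path x y \<gamma>" using assms(1) unfolding uniquely_geodesic_def by blast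
  then have "\<forall>s\<in>{0..1}. \<forall>r\<in>{0..1}. dist (\<gamma> s) (\<gamma> r) = \<bar>s - r\<bar> * dist x y" "\<gamma> 0 = x"
    unfolding geodesic_path_def by blast+
  then have "dist x (\<gamma> t) = \<bar>0 - t\<bar> * dist x y" using assms(2) by force
  then show ?thesis using geo_eq_geodesic_path[OF assms(1) \<gamma> assms(2)] assms(2) by simp
qed

lemma strongly_convex_add_dist_powr:
  fixes f :: "'a::metric_space \<Rightarrow> real"
  assumes "p_uniformly_convex TYPE('a) p c" and "strongly_convex f p \<mu>" and "K \<ge> 0"
  shows "strongly_convex (\<lambda>y. f y + K * dist y x powr p) p (\<mu> + c * K)"
  unfolding strongly_convex_def
proof (intro allI ballI)
  fix a b and \<tau> :: real assume \<tau>: "\<tau> \<in> {0..1}"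
  have f: "f (geo a b \<tau>) \<le> (1 - \<tau>) * f a + \<tau> * f b - \<mu> / 2 * (1 - \<tau>) * \<tau> * dist a b powr p"
    using assms(2) \<tau> unfolding strongly_convex_def by blast
  have "dist x (geo a b \<tau>) powr p \<le> (1 - \<tau>) * dist x a powr p + \<tau> * dist x b powr p
          - c / 2 * \<tau> * (1 - \<tau>) * dist a b powr p"
    using assms(1) \<tau> unfolding p_uniformly_convex_def by blast
  then have "K * dist x (geo a b \<tau>) powr p \<le> K * ((1 - \<tau>) * dist x a powr p + \<tau> * dist x b powr p
          - c / 2 * \<tau> * (1 - \<tau>) * dist a b powr p)"
    using assms(3) by (rule mult_left_mono)
  with f show "f (geo a b \<tau>) + K * dist (geo a b \<tau>) x powr p
      \<le> (1 - \<tau>) * (f a + K * dist a x powr p) + \<tau> * (f b + K * dist b x powr p)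
        - (\<mu> + c * K) / 2 * (1 - \<tau>) * \<tau> * dist a b powr p"
    by (simp add: dist_commute algebra_simps add_divide_distrib diff_divide_distrib)
qed

lemma strongly_convex_min_growth:
  fixes g :: "'a::metric_space \<Rightarrow> real"
  assumes "strongly_convex g p \<nu>" and "\<And>z. g m \<le> g z"
  shows "g m + \<nu> / 2 * dist m y powr p \<le> g y"
proof -
  define D where "D = dist m y powr p"
  have "\<nu> / 2 * (1 - \<tau>) * D \<le> g y - g m" if "\<tau> \<in> {0<..1}" for \<tau>
  proof -
    have "g m \<le> (1 - \<tau>) * g m + \<tau> * g y - \<nu> / 2 * (1 - \<tau>) * \<tau> * D"
      using assms(2)[of "geo m y \<tau>"] assms(1) that unfolding strongly_convex_def D_def
      by (meson greaterThanAtMost_iff atLeastAtMost_iff less_imp_le order_trans)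
    then have "\<tau> * (\<nu> / 2 * (1 - \<tau>) * D) \<le> \<tau> * (g y - g m)" by (simp add: algebra_simps)
    then show ?thesis using that by simp
  qed
  then have "\<forall>\<^sub>F \<tau> in at_right 0. \<nu> / 2 * (1 - \<tau>) * D \<le> g y - g m"
    by (auto simp: eventually_at_right_field intro: exI[of _ 1])
  moreover have "((\<lambda>\<tau>. \<nu> / 2 * (1 - \<tau>) * D) \<longlongrightarrow> \<nu> / 2 * (1 - 0) * D) (at_right 0)"
    by (intro tendsto_intros)
  ultimately have "\<nu> / 2 * D \<le> g y - g m" using tendsto_upperbound by fastforce
  then show ?thesis unfolding D_def by simp
qed

lemma strongly_convex_sublevel_bounded:
  fixes g :: "'a::metric_space \<Rightarrow> real"
  assumes "uniquely_geodesic TYPE('a)" and "p > 1" and "strongly_convex g p \<nu>" and "\<nu> > 0"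
    and "\<And>z. dist x z \<le> 1 \<Longrightarrow> m \<le> g z"
  shows "bounded {y. g y \<le> g x}"
proof -
  txt \<open>On the geodesic from x to y, the point at distance 1 from x bounds d(x,y)^(p-1)
    by 4 (g x - m) / nu once d(x,y) > 2.\<close>
  define R where "R = max 2 ((4 * (g x - m) / \<nu>) powr (1 / (p - 1)))"
  have "dist x y \<le> R" if "g y \<le> g x" for y
  proof (cases "dist x y \<le> 2")
    case False
    define d where "d = dist x y"
    define \<tau> where "\<tau> = 1 / d"
    have d: "d > 2" using False unfolding d_def by simp
    then have \<tau>: "\<tau> \<in> {0..1}" "1 / 2 \<le> 1 - \<tau>" unfolding \<tau>_def by auto
    have "dist x (geo x y \<tau>) = \<tau> * d" unfolding d_def by (rule dist_geo[OF assms(1) \<tau>(1)])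
    with d have "dist x (geo x y \<tau>) = 1" unfolding \<tau>_def by simp
    then have "m \<le> g (geo x y \<tau>)" by (rule assms(5)[OF eq_refl])
    also have "\<dots> \<le> (1 - \<tau>) * g x + \<tau> * g y - \<nu> / 2 * (1 - \<tau>) * \<tau> * d powr p"
      using assms(3) \<tau>(1) unfolding strongly_convex_def d_def by blast
    also have "\<dots> \<le> g x - \<nu> / 2 * (1 / 2) * (\<tau> * d powr p)"
    proof -
      have "\<tau> * g y \<le> \<tau> * g x" using that \<tau>(1) by (simp add: mult_left_mono)
      moreover have "\<nu> / 2 * (1 / 2) * (\<tau> * d powr p) \<le> \<nu> / 2 * (1 - \<tau>) * (\<tau> * d powr p)"
        using \<tau> assms(4) by (intro mult_right_mono mult_left_mono) auto
      ultimately show ?thesis by (simp add: algebra_simps diff_divide_distrib)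
    qed
    also have "\<tau> * d powr p = d powr (p - 1)"
      using d unfolding \<tau>_def by (simp add: powr_diff)
    finally have "d powr (p - 1) \<le> 4 * (g x - m) / \<nu>"
      using assms(4) by (simp add: field_simps)
    then have "(d powr (p - 1)) powr (1 / (p - 1)) \<le> (4 * (g x - m) / \<nu>) powr (1 / (p - 1))"
      using assms(2) d by (intro powr_mono2) auto
    then show ?thesis using assms(2) d unfolding R_def d_def by (simp add: powr_powr)
  qed (simp add: R_def)
  then show ?thesis by (intro bounded_subset[OF bounded_cball[of x R]]) auto
qed

lemma strongly_convex_attains_min:
  fixes g :: "'a::metric_space \<Rightarrow> real"
  assumes "boundedly_compact TYPE('a)" and "uniquely_geodesic TYPE('a)" and "p > 1"
    and "lower_semicont g" and "strongly_convex g p \<nu>" and "\<nu> > 0"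
  obtains m where "\<And>z. g m \<le> g z"
proof -
  fix x :: 'a
  have compact: "compact S" if "bounded S" and "closed S" for S :: "'a set"
    using assms(1) that unfolding boundedly_compact_def by blast
  have "compact (cball x 1)" by (rule compact) simp_all
  then obtain y1 where "\<forall>z\<in>cball x 1. g y1 \<le> g z"
    using lower_semicont_attains_inf[OF assms(4)] by (metis cball_eq_empty zero_le_one not_less)
  then have "bounded {y. g y \<le> g x}"
    by (intro strongly_convex_sublevel_bounded[OF assms(2,3,5,6), of x "g y1"]) auto
  moreover have "closed {y. g y \<le> g x}" using assms(4) unfolding lower_semicont_def by blast
  ultimately have "compact {y. g y \<le> g x}" by (rule compact)
  then obtain m where "m \<in> {y. g y \<le> g x}" "\<forall>z\<in>{y. g y \<le> g x}. g m \<le> g z"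
    using lower_semicont_attains_inf[OF assms(4)] by blast
  then have "g m \<le> g z" for z by (cases "g z \<le> g x") auto
  then show thesis by (rule that)
qed

lemma the_arg_min_strongly_convex:
  fixes g :: "'a::metric_space \<Rightarrow> real"
  assumes "strongly_convex g p \<nu>" and "\<nu> > 0" and "\<And>z. g m \<le> g z"
  shows "(THE y. is_arg_min g (\<lambda>_. True) y) = m"
proof (rule the_equality)
  show "is_arg_min g (\<lambda>_. True) m" using assms(3) by (simp add: is_arg_min_def not_less)
next
  fix y assume "is_arg_min g (\<lambda>_. True) y"
  then have "g y \<le> g m" by (simp add: is_arg_min_def not_less)
  with strongly_convex_min_growth[OF assms(1,3), of y] have "\<nu> / 2 * dist m y powr p \<le> 0" by linarith
  then show "y = m" using assms(2) by (simp add: mult_le_0_iff)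
qed

lemma prox_three_point:
  fixes f :: "'a::metric_space \<Rightarrow> real"
  assumes "p > 1" and "lam > 0"
    and "p_uniformly_convex TYPE('a) p c" and "boundedly_compact TYPE('a)"
    and "lower_semicont f" and "strongly_convex f p \<mu>"
    and "\<mu> \<ge> (2 - c) / (p * lam powr (p - 1))"
  defines "K \<equiv> 1 / (p * lam powr (p - 1))"
  shows "f (prox p f lam x) + K * dist (prox p f lam x) x powr p + K * dist (prox p f lam x) y powr p
           \<le> f y + K * dist y x powr p"
proof -
  define g where "g y = f y + K * dist y x powr p" for y
  have K: "K > 0" using assms(1,2) unfolding K_def by simp
  have "(2 - c) / (p * lam powr (p - 1)) = (2 - c) * K" unfolding K_def by simp
  then have modulus: "2 * K \<le> \<mu> + c * K" using assms(7) by (simp add: algebra_simps)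
  have convex: "strongly_convex g p (\<mu> + c * K)"
    unfolding g_def using assms(3,6) K by (intro strongly_convex_add_dist_powr) auto
  have "lower_semicont g"
    unfolding g_def using assms(1,5)
    by (intro lower_semicont_add_continuous continuous_on_mult_left continuous_on_powr' continuous_intros)
      auto
  moreover have "uniquely_geodesic TYPE('a)" using assms(3) unfolding p_uniformly_convex_def by blast
  ultimately obtain m where m: "\<And>z. g m \<le> g z"
    using strongly_convex_attains_min[OF assms(4) _ assms(1) _ convex] modulus K by force
  have "prox p f lam x = m"
    unfolding prox_def K_def[symmetric] g_def[abs_def, symmetric]
    using the_arg_min_strongly_convex[OF convex _ m] modulus K by simp
  moreover have "g m + (\<mu> + c * K) / 2 * dist m y powr p \<le> g y"
    by (rule strongly_convex_min_growth[OF convex m])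
  moreover have "K * dist m y powr p \<le> (\<mu> + c * K) / 2 * dist m y powr p"
    using modulus by (intro mult_right_mono) auto
  ultimately show ?thesis unfolding g_def by simp
qed

lemma three_point_Delta_le:
  fixes T :: "'a::metric_space \<Rightarrow> 'a"
  assumes "c \<noteq> 0"
    and "f (T x) + K * dist (T x) x powr p + K * dist (T x) y powr p \<le> f y + K * dist y x powr p"
  shows "4 * K / c * Delta p c (T x) x (T x) y \<le> f y - f (T x)"
proof -
  have "4 * K / c * Delta p c (T x) x (T x) y
      = K * dist (T x) y powr p + K * dist (T x) x powr p - K * dist y x powr p"
    using assms(1) unfolding Delta_def by (simp add: dist_commute field_simps)
  with assms(2) show ?thesis by linarith
qed

lemma three_point_psi_le:
  fixes T :: "'a::metric_space \<Rightarrow> 'a"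
  assumes "K > 0" and "c > 0"
    and three_point: "\<And>x y. f (T x) + K * dist (T x) x powr p + K * dist (T x) y powr p
                          \<le> f y + K * dist y x powr p"
  shows "dist (T x) (T y) powr p
           \<le> dist x y powr p - (1 - c / (2 + c)) / (c / (2 + c)) * psi p c x y (T x) (T y)"
proof -
  have "1 - c / (2 + c) = 2 / (2 + c)" using assms(2) by (simp add: field_simps)
  then have "(1 - c / (2 + c)) / (c / (2 + c)) * (c / 2) = 1" using assms(2) by simp
  then have "(1 - c / (2 + c)) / (c / (2 + c)) * psi p c x y (T x) (T y)
      = dist x (T x) powr p + dist y (T y) powr p + dist (T x) (T y) powr p + dist x y powr p
        - dist y (T x) powr p - dist x (T y) powr p"
    unfolding psi_def mult.assoc[symmetric] by simp
  moreover have "K * (dist x (T x) powr p + dist y (T y) powr p + 2 * dist (T x) (T y) powr p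
      - dist x (T y) powr p - dist y (T x) powr p) \<le> 0"
    using three_point[of x "T y"] three_point[of y "T x"] by (simp add: dist_commute algebra_simps)
  then have "dist x (T x) powr p + dist y (T y) powr p + 2 * dist (T x) (T y) powr p
      - dist x (T y) powr p - dist y (T x) powr p \<le> 0"
    using assms(1) by (simp add: mult_le_0_iff)
  ultimately show ?thesis by linarith
qed

theorem mainTheorem13:
  fixes f :: "'a::metric_space \<Rightarrow> real" and p c lam \<mu> :: real
  assumes "p > 1" and "c > 0" and "lam > 0"
    and "p_uniformly_convex TYPE('a) p c"
    and "boundedly_compact TYPE('a)"
    and "lower_semicont f"
    and "strongly_convex f p \<mu>"
    and "\<mu> \<ge> (2 - c) / (p * lam powr (p - 1))"
  shows "(\<forall>x y. 4 / (c * p * lam powr (p - 1)) * Delta p c (prox p f lam x) x (prox p f lam x) y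
              \<le> f y - f (prox p f lam x))
       \<and> (\<forall>x y. let \<alpha> = c / (2 + c) in
              dist (prox p f lam x) (prox p f lam y) powr p
                \<le> dist x y powr p - (1 - \<alpha>) / \<alpha> * psi p c x y (prox p f lam x) (prox p f lam y))"
proof -
  define K where "K = 1 / (p * lam powr (p - 1))"
  have "K > 0" using assms(1,3) unfolding K_def by simp
  have three_point: "f (prox p f lam x) + K * dist (prox p f lam x) x powr p
      + K * dist (prox p f lam x) y powr p \<le> f y + K * dist y x powr p" for x y
    unfolding K_def using assms(1,3-8) by (rule prox_three_point)
  have "4 / (c * p * lam powr (p - 1)) = 4 * K / c" unfolding K_def by simp
  then show ?thesis
    using three_point_Delta_le[where T = "prox p f lam" and f = f, OF _ three_point]
      three_point_psi_le[where T = "prox p f lam" and f = f, OF \<open>K > 0\<close> assms(2) three_point] assms(2)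
    unfolding Let_def by simp
qed

end
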